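(* Let $n\ge 2$ and $N\ge 1$ be integers and let $p$ be a prime with $p\mid N$. Then \[ Z_n(N,p)=\frac{n!}{N}\sum_{\substack{1\le u_1<u_2<\dots<u_{n-1}<N\\ u_1,\;u_2-u_1,\;\dots,\;u_{n-1}-u_{n-2},\;u_{n-1}\in\mathcal P_p}}\frac{1}{u_1u_2\cdots u_{n-1}} . \] (Since $p\mid N$, the condition $u_{n-1}\in\mathcal P_p$ is equivalent to $N-u_{n-1}\in\mathcal P_p$.)
   Context: For a prime $p$, $\mathcal P_p$ denotes the set of positive integers not divisible by $p$. For integers $n,N\ge1$ with $p\mid N$, $Z_n(N,p):=\sum \frac{1}{l_1l_2\cdots l_n}$, the sum over all $(l_1,\dots,l_n)\in\mathcal P_p^n$ with $l_1+\dots+l_n=N$. *)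

theory Defs
  imports "HOL-Analysis.Analysis"
begin

definition inP :: "nat \<Rightarrow> nat \<Rightarrow> bool" where
  "inP p l \<longleftrightarrow> l \<ge> 1 \<and> \<not> p dvd l"

definition Zn :: "nat \<Rightarrow> nat \<Rightarrow> nat \<Rightarrow> real" where
  "Zn n N p = (\<Sum>l \<in> {l \<in> {..<n} \<rightarrow>\<^sub>E {1..N}. (\<forall>i<n. inP p (l i)) \<and> (\<Sum>i<n. l i) = N}.
                 1 / (\<Prod>i<n. real (l i)))"

text \<open>Index set of the right-hand sum: (u_1,...,u_{n-1}) stored as u 0,...,u (n-2),
  with 1 <= u_1 < ... < u_{n-1} < N, u_1 in P_p, u_{j+1}-u_j in P_p, u_{n-1} in P_p.\<close>
definition Uset :: "nat \<Rightarrow> nat \<Rightarrow> nat \<Rightarrow> (nat \<Rightarrow> nat) set" where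
  "Uset n N p = {u \<in> {..<n-1} \<rightarrow>\<^sub>E {1..<N}.
      (\<forall>i j. i < j \<and> j < n - 1 \<longrightarrow> u i < u j) \<and>
      inP p (u 0) \<and>
      (\<forall>i. i + 1 < n - 1 \<longrightarrow> inP p (u (i+1) - u i)) \<and>
      inP p (u (n - 2))}"

end

theory Submission
  imports Defs "HOL-Combinatorics.Permutations"
begin

text \<open>For positive \<open>x\<^sub>1, \<dots>, x\<^sub>n\<close> the sum over all permutations \<open>\<sigma>\<close> of
  \<open>1 / \<Prod>\<^sub>k (x\<^sub>\<sigma>\<^sub>(\<^sub>1\<^sub>) + \<dots> + x\<^sub>\<sigma>\<^sub>(\<^sub>k\<^sub>))\<close> is \<open>1 / (x\<^sub>1 \<cdots> x\<^sub>n)\<close>: the factor \<open>k = n\<close> is the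
  full sum, and grouping the permutations by \<open>\<sigma>(n)\<close> reduces to \<open>n - 1\<close> variables.
  For a composition \<open>l\<close> of \<open>N\<close> that last factor is \<open>N\<close>. Since permuting the parts maps the
  compositions with parts in \<open>\<P>\<^sub>p\<close> onto themselves, summing over them gives \<open>n!/N\<close> times the
  sum of \<open>1 / (u\<^sub>1 \<cdots> u\<^sub>n\<^sub>-\<^sub>1)\<close> over the partial sums \<open>u\<^sub>k = l\<^sub>1 + \<dots> + l\<^sub>k\<close>. These are exactly
  the chains on the right-hand side: the last part \<open>N - u\<^sub>n\<^sub>-\<^sub>1\<close> lies in \<open>\<P>\<^sub>p\<close> iff \<open>u\<^sub>n\<^sub>-\<^sub>1\<close> does,
  as \<open>p\<close> divides \<open>N\<close>.\<close>

lemma sum_permutes_inverse_prod_partial_sums: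
  fixes x :: "nat \<Rightarrow> 'a::linordered_field"
  assumes "\<And>j. j < n \<Longrightarrow> x j > 0"
  shows "(\<Sum>\<sigma> | \<sigma> permutes {..<n}. 1 / (\<Prod>k<n. \<Sum>j\<le>k. x (\<sigma> j))) = 1 / (\<Prod>j<n. x j)"
  using assms
proof (induction n arbitrary: x)
  case 0
  then show ?case by simp
next
  case (Suc n)
  define S where "S = (\<Sum>j\<le>n. x j)"
  define P where "P = (\<Prod>j\<le>n. x j)"
  have pos: "x j > 0" if "j \<le> n" for j
    using Suc.prems that by simp
  have "S > 0" "P > 0"
    unfolding S_def P_def using pos by (auto intro: sum_pos prod_pos)
  have fixed_last: "(\<Sum>q | q permutes {..<n}.
        1 / (\<Prod>k<Suc n. \<Sum>j\<le>k. x ((Transposition.transpose n b \<circ> q) j))) = x b / (S * P)"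
    if "b \<le> n" for b
  proof -
    let ?\<tau> = "Transposition.transpose n b"
    have "(\<Sum>j\<le>n. x ((?\<tau> \<circ> q) j)) = S" if "q permutes {..<n}" for q
    proof -
      have "?\<tau> \<circ> q permutes {..n}"
        using that \<open>b \<le> n\<close> by (intro permutes_compose permutes_swap_id permutes_subset[OF that]) auto
      then show ?thesis
        unfolding S_def by (simp add: sum.permute[where g = x])
    qed
    then have "(\<Sum>q | q permutes {..<n}. 1 / (\<Prod>k<Suc n. \<Sum>j\<le>k. x ((?\<tau> \<circ> q) j)))
        = (\<Sum>q | q permutes {..<n}. 1 / S * (1 / (\<Prod>k<n. \<Sum>j\<le>k. (x \<circ> ?\<tau>) (q j))))"
      by (intro sum.cong) (simp_all add: field_simps)
    also have "\<dots> = 1 / S * (\<Sum>q | q permutes {..<n}. 1 / (\<Prod>k<n. \<Sum>j\<le>k. (x \<circ> ?\<tau>) (q j)))"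
      by (rule sum_distrib_left[symmetric])
    also have "\<dots> = 1 / S * (1 / (\<Prod>j<n. x (?\<tau> j)))"
      using \<open>b \<le> n\<close> pos by (subst Suc.IH) (auto simp: Transposition.transpose_def)
    also have "(\<Prod>j<n. x (?\<tau> j)) * x b = P"
    proof -
      have "P = (\<Prod>j\<le>n. x (?\<tau> j))"
        unfolding P_def using \<open>b \<le> n\<close>
        by (intro prod.permute[simplified comp_def] permutes_swap_id) auto
      then show ?thesis by (simp add: lessThan_Suc_atMost[symmetric])
    qed
    ultimately show ?thesis
      using \<open>S > 0\<close> pos[OF \<open>b \<le> n\<close>] by (auto simp: field_simps)
  qed
  have "{..<Suc n} = insert n {..<n}"
    by auto
  then have "(\<Sum>\<sigma> | \<sigma> permutes {..<Suc n}. 1 / (\<Prod>k<Suc n. \<Sum>j\<le>k. x (\<sigma> j)))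
      = (\<Sum>b\<in>insert n {..<n}. \<Sum>q | q permutes {..<n}.
           1 / (\<Prod>k<Suc n. \<Sum>j\<le>k. x ((Transposition.transpose n b \<circ> q) j)))"
    by (simp only: sum_over_permutations_insert[of "{..<n}" n] finite_lessThan lessThan_iff
        less_irrefl not_False_eq_True)
  also have "\<dots> = (\<Sum>b\<le>n. x b / (S * P))"
    by (intro sum.cong fixed_last) auto
  also have "\<dots> = 1 / P"
    using \<open>S > 0\<close> by (simp add: sum_divide_distrib[symmetric] S_def)
  finally show ?case by (simp add: P_def lessThan_Suc_atMost)
qed

lemma inverse_prod_eq_sum_permutes:
  fixes x :: "nat \<Rightarrow> 'a::linordered_field"
  assumes "n \<ge> 1" and "\<And>j. j < n \<Longrightarrow> x j > 0" and "(\<Sum>j<n. x j) = s"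
  shows "1 / (\<Prod>j<n. x j) = 1 / s * (\<Sum>\<sigma> | \<sigma> permutes {..<n}. 1 / (\<Prod>k<n-1. \<Sum>j\<le>k. x (\<sigma> j)))"
proof -
  have "(\<Prod>k<n. \<Sum>j\<le>k. x (\<sigma> j)) = (\<Prod>k<n-1. \<Sum>j\<le>k. x (\<sigma> j)) * s"
    if "\<sigma> permutes {..<n}" for \<sigma>
  proof -
    have "(\<Sum>j\<le>n-1. x (\<sigma> j)) = s"
      using \<open>n \<ge> 1\<close> assms(3) sum.permute[OF that, of x]
      by (simp add: atMost_atLeast0 atLeast0LessThan[symmetric] atLeastLessThanSuc_atLeastAtMost[symmetric])
    then show ?thesis
      using \<open>n \<ge> 1\<close> prod.lessThan_Suc[of "\<lambda>k. \<Sum>j\<le>k. x (\<sigma> j)" "n - 1"] by simp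
  qed
  then show ?thesis
    using sum_permutes_inverse_prod_partial_sums[of n x] assms(2)
    by (simp add: sum_distrib_left mult.commute)
qed

definition compositions :: "(nat \<Rightarrow> bool) \<Rightarrow> nat \<Rightarrow> nat \<Rightarrow> (nat \<Rightarrow> nat) set" where
  "compositions A n N = {l \<in> {..<n} \<rightarrow>\<^sub>E {1..N}. (\<forall>i<n. A (l i)) \<and> (\<Sum>i<n. l i) = N}"

lemma Zn_eq_sum_compositions:
  "Zn n N p = (\<Sum>l \<in> compositions (inP p) n N. 1 / (\<Prod>i<n. real (l i)))"
  by (simp add: Zn_def compositions_def)

lemma compositions_compose_permutes:
  assumes "l \<in> compositions A n N" and "\<sigma> permutes {..<n}"
  shows "l \<circ> \<sigma> \<in> compositions A n N"
proof -
  have "(\<Sum>i<n. l (\<sigma> i)) = (\<Sum>i<n. l i)"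
    using sum.permute[OF assms(2), of l] by simp
  moreover have "\<sigma> i < n" if "i < n" for i
    using permutes_in_image[OF assms(2)] that by simp
  moreover have "\<sigma> i = i" if "\<not> i < n" for i
    using permutes_not_in[OF assms(2)] that by simp
  ultimately show ?thesis
    using assms(1) unfolding compositions_def PiE_def Pi_def extensional_def by auto
qed

lemma sum_compositions_compose_permutes:
  assumes "\<sigma> permutes {..<n}"
  shows "(\<Sum>l \<in> compositions A n N. f (l \<circ> \<sigma>)) = (\<Sum>l \<in> compositions A n N. f l)"
  by (rule sum.reindex_bij_witness[of _ "\<lambda>l. l \<circ> inv \<sigma>" "\<lambda>l. l \<circ> \<sigma>"])
    (use assms permutes_inv[OF assms] compositions_compose_permutes in
      \<open>auto simp: comp_assoc permutes_inv_o\<close>)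

lemma sum_inverse_prod_compositions:
  assumes "n \<ge> 1"
  shows "(\<Sum>l \<in> compositions A n N. 1 / (\<Prod>i<n. real (l i)))
    = fact n / real N * (\<Sum>m \<in> compositions A n N. 1 / (\<Prod>k<n-1. real (\<Sum>j\<le>k. m j)))"
proof -
  let ?F = "\<lambda>m. 1 / (\<Prod>k<n-1. real (\<Sum>j\<le>k. m j))"
  have "1 / (\<Prod>i<n. real (l i)) = 1 / real N * (\<Sum>\<sigma> | \<sigma> permutes {..<n}. ?F (l \<circ> \<sigma>))"
    if l: "l \<in> compositions A n N" for l
  proof -
    have "1 / (\<Prod>i<n. real (l i))
        = 1 / real N * (\<Sum>\<sigma> | \<sigma> permutes {..<n}. 1 / (\<Prod>k<n-1. \<Sum>j\<le>k. real (l (\<sigma> j))))"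
    proof (rule inverse_prod_eq_sum_permutes[OF assms])
      show "real (l j) > 0" if "j < n" for j
        using l that by (force simp: compositions_def PiE_iff)
      show "(\<Sum>j<n. real (l j)) = real N"
        using l by (simp add: compositions_def flip: of_nat_sum)
    qed
    then show ?thesis
      by simp
  qed
  then have "(\<Sum>l \<in> compositions A n N. 1 / (\<Prod>i<n. real (l i)))
      = 1 / real N * (\<Sum>\<sigma> | \<sigma> permutes {..<n}. \<Sum>l \<in> compositions A n N. ?F (l \<circ> \<sigma>))"
    by (simp add: sum_distrib_left sum.swap[of _ "compositions A n N"])
  also have "\<dots> = 1 / real N * (\<Sum>\<sigma> | \<sigma> permutes {..<n}. \<Sum>m \<in> compositions A n N. ?F m)"
    by (intro arg_cong[where f = "\<lambda>x. 1 / real N * x"] sum.cong refl sum_compositions_compose_permutes) simp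
  also have "\<dots> = fact n / real N * (\<Sum>m \<in> compositions A n N. ?F m)"
    by (simp add: card_permutations)
  finally show ?thesis .
qed

definition partial_sums :: "nat \<Rightarrow> (nat \<Rightarrow> nat) \<Rightarrow> nat \<Rightarrow> nat" where
  "partial_sums n m = (\<lambda>k. if k < n - 1 then \<Sum>j\<le>k. m j else undefined)"

text \<open>The consecutive differences of the chain \<open>0 < u 0 < \<dots> < u (n - 2) < N\<close>.\<close>
definition gaps :: "nat \<Rightarrow> nat \<Rightarrow> (nat \<Rightarrow> nat) \<Rightarrow> nat \<Rightarrow> nat" where
  "gaps n N u = (\<lambda>i. if i < n then (if i < n - 1 then u i else N) - (if i = 0 then 0 else u (i - 1))
                    else undefined)"

lemma UsetD:
  assumes "u \<in> Uset n N p"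
  shows "u \<in> {..<n-1} \<rightarrow>\<^sub>E {1..<N}" and "\<And>i j. i < j \<Longrightarrow> j < n - 1 \<Longrightarrow> u i < u j"
    and "inP p (u 0)" and "\<And>i. i + 1 < n - 1 \<Longrightarrow> inP p (u (i + 1) - u i)"
    and "inP p (u (n - 2))"
  using assms unfolding Uset_def by auto

lemma Uset_less_N:
  assumes "u \<in> Uset n N p" and "i < n - 1"
  shows "u i < N"
  using UsetD(1)[OF assms(1)] assms(2) by (auto simp: PiE_iff)

lemma compositions_sum_split_last:
  assumes "m \<in> compositions A n N" and "n \<ge> 2"
  shows "(\<Sum>j\<le>n-2. m j) + m (n - 1) = N"
proof -
  have "{..<n} = insert (n - 1) {..n-2}" and "n - 1 \<notin> {..n-2}"
    using assms(2) by auto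
  then show ?thesis
    using assms(1) by (simp add: compositions_def add.commute)
qed

lemma partial_sums_in_Uset:
  assumes m: "m \<in> compositions (inP p) n N" and "n \<ge> 2" and "p dvd N"
  shows "partial_sums n m \<in> Uset n N p"
proof -
  have parts: "inP p (m j)" "m j \<ge> 1" if "j < n" for j
    using m that by (auto simp: compositions_def inP_def)
  have total: "(\<Sum>j\<le>n-2. m j) + m (n - 1) = N"
    using compositions_sum_split_last[OF m \<open>n \<ge> 2\<close>] .
  have increasing: "(\<Sum>j\<le>i. m j) < (\<Sum>j\<le>k. m j)" if "i < k" "k < n" for i k
    using that parts(2) by (intro sum_strict_mono2[where b = k]) (auto simp: Suc_le_eq)
  have "(\<Sum>j\<le>k. m j) \<ge> 1" for k
    using parts(2)[of 0] \<open>n \<ge> 2\<close> member_le_sum[of 0 "{..k}" m] by simp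
  moreover have "(\<Sum>j\<le>k. m j) < N" if "k < n - 1" for k
  proof -
    have "(\<Sum>j\<le>k. m j) \<le> (\<Sum>j\<le>n-2. m j)"
      using that by (intro sum_mono2) auto
    then show ?thesis
      using total parts(2)[of "n - 1"] \<open>n \<ge> 2\<close> by linarith
  qed
  moreover have "inP p (\<Sum>j\<le>n-2. m j)"
  proof -
    have "\<not> p dvd m (n - 1)"
      using parts(1)[of "n - 1"] \<open>n \<ge> 2\<close> by (simp add: inP_def)
    then have "\<not> p dvd (\<Sum>j\<le>n-2. m j)"
      using total \<open>p dvd N\<close> by (metis dvd_add_right_iff)
    then show ?thesis
      using \<open>(\<Sum>j\<le>n-2. m j) \<ge> 1\<close> by (simp add: inP_def)
  qed
  ultimately show ?thesis
    using parts(1)[of 0] parts(1)[of "Suc _"] increasing \<open>n \<ge> 2\<close>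
    by (auto simp: Uset_def partial_sums_def PiE_iff extensional_def)
qed

lemma sum_gaps:
  assumes u: "u \<in> Uset n N p" and "n \<ge> 2" and "k < n"
  shows "(\<Sum>j\<le>k. gaps n N u j) = (if k < n - 1 then u k else N)"
  using \<open>k < n\<close>
proof (induction k)
  case 0
  then show ?case
    using \<open>n \<ge> 2\<close> by (simp add: gaps_def)
next
  case (Suc k)
  have "u k < (if Suc k < n - 1 then u (Suc k) else N)"
    using UsetD(2)[OF u, of k "Suc k"] Uset_less_N[OF u, of k] Suc.prems by auto
  then show ?case
    using Suc by (simp add: gaps_def)
qed

lemma gaps_in_compositions:
  assumes u: "u \<in> Uset n N p" and "n \<ge> 2" and "p dvd N"
  shows "gaps n N u \<in> compositions (inP p) n N"
proof -
  have "inP p (gaps n N u i)" if "i < n" for i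
  proof -
    consider "i = 0" | "0 < i" "i < n - 1" | "i = n - 1"
      using \<open>i < n\<close> by linarith
    then show ?thesis
    proof cases
      case 1
      then show ?thesis
        using UsetD(3)[OF u] \<open>n \<ge> 2\<close> by (simp add: gaps_def)
    next
      case 2
      then show ?thesis
        using UsetD(4)[OF u, of "i - 1"] by (auto simp: gaps_def)
    next
      case 3
      have "u (n - 2) < N"
        using Uset_less_N[OF u] \<open>n \<ge> 2\<close> by simp
      moreover have "\<not> p dvd u (n - 2)"
        using UsetD(5)[OF u] by (simp add: inP_def)
      ultimately have "\<not> p dvd N - u (n - 2)"
        using \<open>p dvd N\<close> by (metis diff_diff_cancel dvd_diff_nat less_imp_le)
      then show ?thesis
        using 3 \<open>u (n - 2) < N\<close> \<open>n \<ge> 2\<close> by (auto simp: gaps_def inP_def numeral_2_eq_2)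
    qed
  qed
  moreover have "gaps n N u i \<le> N" if "i < n" for i
    using sum_gaps[OF u \<open>n \<ge> 2\<close> \<open>i < n\<close>] member_le_sum[of i "{..i}" "gaps n N u"]
      Uset_less_N[OF u, of i] by (auto split: if_splits)
  moreover have "(\<Sum>i<n. gaps n N u i) = N"
    using sum_gaps[OF u \<open>n \<ge> 2\<close>, of "n - 1"] \<open>n \<ge> 2\<close>
    by (simp add: atMost_atLeast0 atLeast0LessThan[symmetric]
        atLeastLessThanSuc_atLeastAtMost[symmetric])
  ultimately show ?thesis
    by (auto simp: compositions_def PiE_iff extensional_def inP_def Suc_le_eq gaps_def)
qed

lemma partial_sums_gaps:
  assumes u: "u \<in> Uset n N p" and "n \<ge> 2"
  shows "partial_sums n (gaps n N u) = u"
proof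
  fix k
  show "partial_sums n (gaps n N u) k = u k"
    using sum_gaps[OF u \<open>n \<ge> 2\<close>, of k] UsetD(1)[OF u]
    by (auto simp: partial_sums_def PiE_iff extensional_def)
qed

lemma gaps_partial_sums:
  assumes m: "m \<in> compositions A n N" and "n \<ge> 2"
  shows "gaps n N (partial_sums n m) = m"
proof
  fix i
  consider "i = 0" | "0 < i" "i < n - 1" | "i = n - 1" | "i \<ge> n"
    by linarith
  then show "gaps n N (partial_sums n m) i = m i"
  proof cases
    case 2
    then obtain j where "i = Suc j"
      using gr0_conv_Suc by blast
    then show ?thesis
      using 2 by (auto simp: gaps_def partial_sums_def)
  next
    case 3
    then show ?thesis
      using compositions_sum_split_last[OF m \<open>n \<ge> 2\<close>] \<open>n \<ge> 2\<close>
      by (auto simp: gaps_def partial_sums_def numeral_2_eq_2)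
  next
    case 4
    then show ?thesis
      using m by (auto simp: gaps_def compositions_def PiE_iff extensional_def)
  qed (use \<open>n \<ge> 2\<close> in \<open>simp add: gaps_def partial_sums_def\<close>)
qed

lemma sum_compositions_eq_sum_Uset:
  assumes "n \<ge> 2" and "p dvd N"
  shows "(\<Sum>m \<in> compositions (inP p) n N. 1 / (\<Prod>k<n-1. real (\<Sum>j\<le>k. m j)))
    = (\<Sum>u \<in> Uset n N p. 1 / (\<Prod>i<n-1. real (u i)))"
proof (rule sum.reindex_bij_witness[of _ "gaps n N" "partial_sums n"])
  fix u assume "u \<in> Uset n N p"
  then show "gaps n N u \<in> compositions (inP p) n N" "partial_sums n (gaps n N u) = u"
    using assms by (simp_all add: gaps_in_compositions partial_sums_gaps)
next
  fix m assume "m \<in> compositions (inP p) n N"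
  then show "partial_sums n m \<in> Uset n N p" "gaps n N (partial_sums n m) = m"
    using assms by (simp_all add: partial_sums_in_Uset gaps_partial_sums)
  show "1 / (\<Prod>i<n-1. real (partial_sums n m i)) = 1 / (\<Prod>k<n-1. real (\<Sum>j\<le>k. m j))"
    by (simp add: partial_sums_def)
qed

theorem lemma2p1:
  fixes n N p :: nat
  assumes "n \<ge> 2" and "N \<ge> 1" and "prime p" and "p dvd N"
  shows "Zn n N p = fact n / real N * (\<Sum>u \<in> Uset n N p. 1 / (\<Prod>i<n-1. real (u i)))"
  using sum_inverse_prod_compositions[of n "inP p" N] sum_compositions_eq_sum_Uset[OF assms(1,4)] assms(1)
  by (simp add: Zn_eq_sum_compositions)

end
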